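(* Let $N\ge 2$ be an integer, $\omega_0>0$, $f_0>0$, $\sigma=f_0/\omega_0^2$. Let $x_0(t),\dots,x_{N-1}(t)$ solve \[ \ddot x_0=0,\qquad \ddot x_k=\omega_0^2\,(x_{k-1}-2x_k+x_{k+1})\ (1\le k\le N-2),\qquad \ddot x_{N-1}=\omega_0^2\,(x_{N-2}-x_{N-1})+f_0, \] with $x_k(0)=0$, $\dot x_k(0)=0$ for all $k$. Then for $n=0,\dots,N-1$ and $t\ge 0$, \[ x_n(t)=\sigma\left[n-\frac{1}{2N-1}\sum_{m=1}^{2N-2}\gamma_{m,N,n}\cos(\omega_m t)\right], \] where \[ \gamma_{m,N,n}=\frac{1}{\sin^2\frac{\pi m}{4N-2}}\,\sin\frac{\pi m}{2}\,\cos\frac{\pi m}{4N-2}\,\sin\frac{\pi nm}{2N-1},\qquad \omega_m=2\omega_0\sin\frac{\pi m}{4N-2}. \] *)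

theory Defs
  imports Complex_Main
begin

definition chain_gamma :: "nat \<Rightarrow> nat \<Rightarrow> nat \<Rightarrow> real" where
  "chain_gamma m N n =
     (1 / (sin (pi * real m / (4 * real N - 2)))\<^sup>2) * sin (pi * real m / 2)
     * cos (pi * real m / (4 * real N - 2)) * sin (pi * real n * real m / (2 * real N - 1))"

definition chain_omega :: "real \<Rightarrow> nat \<Rightarrow> nat \<Rightarrow> real" where
  "chain_omega \<omega>\<^sub>0 N m = 2 * \<omega>\<^sub>0 * sin (pi * real m / (4 * real N - 2))"

end

theory Submission
  imports Defs "HOL-Analysis.Analysis"
begin

text \<open>
  Write \<open>h = pi m / (4N - 2)\<close>. The vector \<open>n \<mapsto> sin (2 n h)\<close> vanishes at node 0 and, for the
  modes \<open>m\<close> with \<open>sin (pi m / 2) \<noteq> 0\<close>, takes equal values at \<open>N - 1\<close> and at a ghost node \<open>N\<close>;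
  it is an eigenvector of the discrete Laplacian with eigenvalue \<open>-4 sin\<^sup>2 h\<close>, which is
  \<open>-(chain_omega \<omega>\<^sub>0 N m / \<omega>\<^sub>0)\<^sup>2\<close>. Hence each cosine term of the formula solves the
  homogeneous fixed-free chain, and the linear part \<open>\<sigma> n\<close>, whose value at the ghost node exceeds
  that at \<open>N - 1\<close> by \<open>\<sigma>\<close>, produces the force \<open>\<omega>\<^sub>0\<^sup>2 \<sigma> = f\<^sub>0\<close> at the free end. The initial
  velocity vanishes termwise; the initial displacement vanishes because
  \<open>\<Sum>\<^sub>m chain_gamma m N n = n (2N - 1)\<close>, which follows from the second differences in \<open>n\<close>,
  evaluated by Dirichlet-kernel sums of cosines. Uniqueness comes from the conserved energy
  \<open>\<Sum>\<^sub>k w\<^sub>k\<^sup>2 + \<omega>\<^sub>0\<^sup>2 \<Sum>\<^sub>k (e\<^sub>k - e\<^sub>k\<^sub>-\<^sub>1)\<^sup>2\<close> of the difference of two solutions.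
\<close>

lemma sin_half_mult_sum_cos:
  fixes x :: real
  shows "2 * sin (x / 2) * (\<Sum>m=1..L. cos (real m * x)) = sin ((real L + 1/2) * x) - sin (x / 2)"
proof (induction L)
  case 0
  then show ?case by simp
next
  case (Suc L)
  have "sin (real (Suc L) * x + x / 2) - sin (real (Suc L) * x - x / 2)
      = 2 * sin (x / 2) * cos (real (Suc L) * x)"
    by (simp add: sin_add sin_diff)
  moreover have "(real (Suc L) + 1/2) * x = real (Suc L) * x + x / 2"
    and "(real L + 1/2) * x = real (Suc L) * x - x / 2"
    by (simp_all add: algebra_simps)
  ultimately show ?case
    using Suc by (simp add: algebra_simps)
qed

lemma sum_cos_multiples_pi_div:
  assumes "1 \<le> j" "j \<le> K"
  shows "(\<Sum>m=1..K-1. cos (real m * (real j * pi / real K))) = - (1 + (-1) ^ j) / 2"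
proof -
  define x where "x = real j * pi / real K"
  have "0 < x / 2" "x / 2 \<le> pi / 2"
    using assms by (auto simp: x_def field_simps)
  then have sin_pos: "sin (x / 2) > 0"
    by (intro sin_gt_zero) auto
  have "(real (K - 1) + 1/2) * x = real j * pi - x / 2"
    using assms by (simp add: x_def of_nat_diff field_simps)
  then have "sin ((real (K - 1) + 1/2) * x) = - ((-1) ^ j * sin (x / 2))"
    by (simp add: sin_diff sin_npi cos_npi)
  then have "sin (x / 2) * (2 * (\<Sum>m=1..K-1. cos (real m * x)) + (1 + (-1) ^ j)) = 0"
    using sin_half_mult_sum_cos[of x "K - 1"] by (simp add: algebra_simps)
  then show ?thesis
    using sin_pos by (simp add: x_def)
qed

lemma sum_cos_multiples_pi_div_consecutive:
  assumes "1 \<le> j" "j < K"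
  shows "(\<Sum>m=1..K-1. cos (real m * (real j * pi / real K)))
       + (\<Sum>m=1..K-1. cos (real m * (real (Suc j) * pi / real K))) = -1"
  using sum_cos_multiples_pi_div[of j K] sum_cos_multiples_pi_div[of "Suc j" K] assms by simp

lemma sin_cos_sin_eq_sum_cos:
  fixes a b c :: real
  shows "sin a * cos b * sin c = (cos (a - c - b) + cos (a - c + b) - cos (a + c - b) - cos (a + c + b)) / 4"
  by (simp add: cos_add cos_diff sin_add sin_diff algebra_simps)

lemma sum_sin_cos_sin_chain:
  assumes N: "N \<ge> 2" and n: "1 \<le> n" "n \<le> N - 1"
  shows "4 * (\<Sum>m=1..2*N-2. sin (pi * real m / 2) * cos (pi * real m / (4 * real N - 2))
            * sin (pi * real n * real m / (2 * real N - 1)))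
       = (if n = N - 1 then 2 * real N - 1 else 0)"
proof -
  define K where "K = 2 * N - 1"
  define C where "C j = (\<Sum>m=1..K-1. cos (real m * (real j * pi / real K)))" for j
  define a where "a = N - 1 - n"
  have K: "real K = 2 * real N - 1" "2 * N - 2 = K - 1" "K = 2 * a + 2 * n + 1"
    using N n by (auto simp: K_def a_def of_nat_diff)
  \<comment> \<open>Each summand splits into cosines at the multiples \<open>a, a + 1, a + 2n, a + 2n + 1\<close> of
      \<open>pi / K\<close>. Summed over \<open>m\<close>, each consecutive pair gives \<open>-1\<close>, except the pair at \<open>a = 0\<close>.\<close>
  have summand: "sin (pi * real m / 2) * cos (pi * real m / (4 * real N - 2))
        * sin (pi * real n * real m / (2 * real N - 1))
      = (cos (real m * (real a * pi / real K)) + cos (real m * (real (Suc a) * pi / real K))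
         - cos (real m * (real (a + 2 * n) * pi / real K))
         - cos (real m * (real (Suc (a + 2 * n)) * pi / real K))) / 4" for m
  proof -
    define h where "h = pi * real m / (2 * real K)"
    have "real K = 2 * real a + 2 * real n + 1" "4 * real N - 2 = 2 * real K" "2 * real N - 1 = real K"
      using K by simp_all
    moreover have "real K > 0" using N K(1) by simp
    ultimately have angles: "pi * real m / 2 = (2 * real a + 2 * real n + 1) * h"
      "pi * real m / (4 * real N - 2) = h"
      "pi * real n * real m / (2 * real N - 1) = 2 * real n * h"
      "\<And>j. real m * (real j * pi / real K) = 2 * real j * h"
      by (simp_all add: h_def field_simps)
    show ?thesis
      unfolding angles sin_cos_sin_eq_sum_cos by (simp add: algebra_simps)
  qed
  have sum: "(\<Sum>m=1..2*N-2. sin (pi * real m / 2) * cos (pi * real m / (4 * real N - 2))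
            * sin (pi * real n * real m / (2 * real N - 1)))
      = (C a + C (Suc a) - C (a + 2 * n) - C (Suc (a + 2 * n))) / 4"
    unfolding summand C_def K(2) sum_subtractf[symmetric] sum.distrib[symmetric]
      sum_divide_distrib[symmetric] by simp
  have pair: "C j + C (Suc j) = -1" if "1 \<le> j" "j < K" for j
    using sum_cos_multiples_pi_div_consecutive[OF that] by (simp add: C_def)
  show ?thesis
  proof (cases "n = N - 1")
    case True
    then have "a = 0" "Suc (2 * n) = K" using N by (auto simp: a_def K_def)
    moreover have "C 0 = real K - 1" "C 1 = 0"
      using sum_cos_multiples_pi_div[of 1 K] N by (auto simp: C_def K_def of_nat_diff)
    ultimately show ?thesis
      using sum pair[of "2 * n"] True N K(1) by (simp add: field_simps)
  next
    case False
    then have "1 \<le> a" "a < K" "1 \<le> a + 2 * n" "a + 2 * n < K"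
      using n K(3) by (auto simp: a_def)
    then show ?thesis
      using sum pair[of a] pair[of "a + 2 * n"] False by simp
  qed
qed

lemma chain_gamma_0 [simp]: "chain_gamma m N 0 = 0"
  by (simp add: chain_gamma_def)

text \<open>No hypothesis on \<open>m\<close> is needed: where \<open>sin (pi m / (4N - 2)) = 0\<close> both sides are \<open>0\<close>, as \<open>1 / 0 = 0\<close>.\<close>

lemma chain_gamma_second_difference:
  assumes "1 \<le> n"
  shows "chain_gamma m N (n + 1) - 2 * chain_gamma m N n + chain_gamma m N (n - 1)
       = -4 * (sin (pi * real m / (4 * real N - 2)))\<^sup>2 * chain_gamma m N n"
proof -
  define h where "h = pi * real m / (4 * real N - 2)"
  define \<theta> where "\<theta> = pi * real m / (2 * real N - 1)"
  define A where "A = 1 / (sin h)\<^sup>2 * sin (pi * real m / 2) * cos h"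
  have gamma: "chain_gamma m N k = A * sin (real k * \<theta>)" for k
    by (simp add: chain_gamma_def A_def h_def \<theta>_def field_simps)
  have "2 * real N - 1 \<noteq> 0"
    by (cases N) auto
  then have "\<theta> = 2 * h"
    by (simp add: h_def \<theta>_def field_simps)
  then have cos: "cos \<theta> = 1 - 2 * (sin h)\<^sup>2"
    by (simp add: cos_double_sin)
  have "sin (real (n + 1) * \<theta>) + sin (real (n - 1) * \<theta>) = 2 * sin (real n * \<theta>) * (1 - 2 * (sin h)\<^sup>2)"
    unfolding cos[symmetric] using assms by (simp add: of_nat_diff sin_add sin_diff algebra_simps)
  then have "sin (real (n + 1) * \<theta>) - 2 * sin (real n * \<theta>) + sin (real (n - 1) * \<theta>)
      = -4 * (sin h)\<^sup>2 * sin (real n * \<theta>)"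
    by (simp add: algebra_simps)
  then have "A * (sin (real (n + 1) * \<theta>) - 2 * sin (real n * \<theta>) + sin (real (n - 1) * \<theta>))
      = A * (-4 * (sin h)\<^sup>2 * sin (real n * \<theta>))"
    by (rule arg_cong)
  then show ?thesis
    unfolding gamma h_def[symmetric] by (simp add: algebra_simps)
qed

lemma sin_chain_angle_nonzero:
  assumes "1 \<le> m" "m \<le> 2 * N - 2"
  shows "sin (pi * real m / (4 * real N - 2)) \<noteq> 0"
proof -
  have "real m < 4 * real N - 2" "1 \<le> real m"
    using assms by linarith+
  moreover from this have "pi * real m < pi * (4 * real N - 2)"
    by simp
  ultimately have "0 < pi * real m / (4 * real N - 2)" "pi * real m / (4 * real N - 2) < pi"
    by (simp_all add: field_simps)
  then show ?thesis
    using sin_gt_zero by force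
qed

lemma sin_sq_mult_chain_gamma:
  assumes "sin (pi * real m / (4 * real N - 2)) \<noteq> 0"
  shows "(sin (pi * real m / (4 * real N - 2)))\<^sup>2 * chain_gamma m N n
       = sin (pi * real m / 2) * cos (pi * real m / (4 * real N - 2))
         * sin (pi * real n * real m / (2 * real N - 1))"
  using assms by (simp add: chain_gamma_def)

lemma chain_gamma_free_end:
  assumes "N \<ge> 1"
  shows "chain_gamma m N N = chain_gamma m N (N - 1)"
proof (cases "even m")
  case True
  then obtain k where "m = 2 * k" by blast
  then have "sin (pi * real m / 2) = 0"
    by (simp add: sin_npi mult.commute)
  then show ?thesis
    by (simp add: chain_gamma_def)
next
  case False
  define \<theta> where "\<theta> = pi * real m / (2 * real N - 1)"
  have "real N * \<theta> = pi * real m - real (N - 1) * \<theta>"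
    using assms by (simp add: \<theta>_def of_nat_diff field_simps)
  then have "sin (real N * \<theta>) = sin (real (N - 1) * \<theta>)"
    using False by (simp add: sin_diff sin_npi cos_npi mult.commute)
  then show ?thesis
    by (simp add: chain_gamma_def \<theta>_def mult.assoc mult.left_commute)
qed

lemma sum_chain_gamma_second_difference:
  assumes N: "N \<ge> 2" and k: "1 \<le> k" "k \<le> N - 1"
  shows "(\<Sum>m=1..2*N-2. chain_gamma m N (k + 1)) - 2 * (\<Sum>m=1..2*N-2. chain_gamma m N k)
           + (\<Sum>m=1..2*N-2. chain_gamma m N (k - 1))
       = - (if k = N - 1 then 2 * real N - 1 else 0)"
proof -
  have second_difference:
    "chain_gamma m N (k + 1) - 2 * chain_gamma m N k + chain_gamma m N (k - 1)
     = - (4 * (sin (pi * real m / 2) * cos (pi * real m / (4 * real N - 2))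
         * sin (pi * real k * real m / (2 * real N - 1))))"
    if "m \<in> {1..2*N-2}" for m
    using chain_gamma_second_difference[OF k(1), of m N] that
      sin_sq_mult_chain_gamma[OF sin_chain_angle_nonzero, of m N k] by simp
  have "(\<Sum>m=1..2*N-2. chain_gamma m N (k + 1)) - 2 * (\<Sum>m=1..2*N-2. chain_gamma m N k)
           + (\<Sum>m=1..2*N-2. chain_gamma m N (k - 1))
      = (\<Sum>m=1..2*N-2. chain_gamma m N (k + 1) - 2 * chain_gamma m N k + chain_gamma m N (k - 1))"
    by (simp add: sum.distrib sum_subtractf sum_distrib_left)
  also have "\<dots> = - (4 * (\<Sum>m=1..2*N-2. sin (pi * real m / 2) * cos (pi * real m / (4 * real N - 2))
          * sin (pi * real k * real m / (2 * real N - 1))))"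
    unfolding sum_distrib_left sum_negf[symmetric] by (intro sum.cong refl second_difference)
  finally show ?thesis
    unfolding sum_sin_cos_sin_chain[OF N k] .
qed

lemma sum_chain_gamma:
  assumes N: "N \<ge> 2" and n: "n \<le> N - 1"
  shows "(\<Sum>m=1..2*N-2. chain_gamma m N n) = real n * (2 * real N - 1)"
proof -
  define S where "S k = (\<Sum>m=1..2*N-2. chain_gamma m N k)" for k
  define D where "D k = S (k + 1) - S k" for k
  have D_step: "D k = D (k - 1) - (if k = N - 1 then 2 * real N - 1 else 0)"
    if "1 \<le> k" "k \<le> N - 1" for k
    using sum_chain_gamma_second_difference[OF N that] that
    by (simp add: D_def S_def algebra_simps)
  have D_const: "D k = D 0" if "k \<le> N - 2" for k
    using that
  proof (induction k)
    case (Suc k)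
    then show ?case using D_step[of "Suc k"] by simp
  qed simp
  \<comment> \<open>The free end gives \<open>D (N - 1) = 0\<close>, and the jump at \<open>N - 1\<close> then fixes the constant slope.\<close>
  have "D (N - 1) = 0"
    using chain_gamma_free_end N by (simp add: D_def S_def)
  then have D0: "D 0 = 2 * real N - 1"
    using D_step[of "N - 1"] D_const[of "N - 2"] N by (simp add: numeral_2_eq_2)
  have "S k = real k * (2 * real N - 1)" if "k \<le> N - 1" for k
    using that
  proof (induction k)
    case (Suc k)
    then have "D k = 2 * real N - 1"
      using D_const[of k] D0 by simp
    then show ?case
      using Suc by (simp add: D_def algebra_simps)
  qed (simp add: S_def)
  then show ?thesis
    using n by (simp add: S_def)
qed

definition chain_displacement :: "real \<Rightarrow> real \<Rightarrow> nat \<Rightarrow> nat \<Rightarrow> real \<Rightarrow> real" where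
  "chain_displacement \<sigma> \<omega>\<^sub>0 N n t = \<sigma> * (real n - 1 / (2 * real N - 1) *
     (\<Sum>m = 1..2 * N - 2. chain_gamma m N n * cos (chain_omega \<omega>\<^sub>0 N m * t)))"

definition chain_velocity :: "real \<Rightarrow> real \<Rightarrow> nat \<Rightarrow> nat \<Rightarrow> real \<Rightarrow> real" where
  "chain_velocity \<sigma> \<omega>\<^sub>0 N n t = \<sigma> / (2 * real N - 1) *
     (\<Sum>m = 1..2 * N - 2. chain_gamma m N n * chain_omega \<omega>\<^sub>0 N m * sin (chain_omega \<omega>\<^sub>0 N m * t))"

lemma chain_velocity_0 [simp]: "chain_velocity \<sigma> \<omega>\<^sub>0 N 0 t = 0"
  by (simp add: chain_velocity_def)

lemma chain_velocity_at_0 [simp]: "chain_velocity \<sigma> \<omega>\<^sub>0 N n 0 = 0"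
  by (simp add: chain_velocity_def)

lemma chain_displacement_at_0:
  assumes "N \<ge> 2" "n \<le> N - 1"
  shows "chain_displacement \<sigma> \<omega>\<^sub>0 N n 0 = 0"
  using sum_chain_gamma[OF assms] assms by (simp add: chain_displacement_def)

lemma chain_displacement_free_end:
  assumes "N \<ge> 1"
  shows "chain_displacement \<sigma> \<omega>\<^sub>0 N N t = chain_displacement \<sigma> \<omega>\<^sub>0 N (N - 1) t + \<sigma>"
  using chain_gamma_free_end[OF assms] assms
  by (simp add: chain_displacement_def of_nat_diff algebra_simps)

lemma has_real_derivative_chain_displacement:
  "(chain_displacement \<sigma> \<omega>\<^sub>0 N n has_real_derivative chain_velocity \<sigma> \<omega>\<^sub>0 N n t) (at t within S)"
  unfolding chain_displacement_def chain_velocity_def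
  by (rule derivative_eq_intros refl | simp add: sum_negf[symmetric] sum_distrib_left algebra_simps)+

lemma has_real_derivative_chain_velocity:
  assumes "1 \<le> n"
  shows "(chain_velocity \<sigma> \<omega>\<^sub>0 N n has_real_derivative
           \<omega>\<^sub>0\<^sup>2 * (chain_displacement \<sigma> \<omega>\<^sub>0 N (n - 1) t - 2 * chain_displacement \<sigma> \<omega>\<^sub>0 N n t
                   + chain_displacement \<sigma> \<omega>\<^sub>0 N (n + 1) t)) (at t within S)"
proof -
  let ?\<omega> = "chain_omega \<omega>\<^sub>0 N" and ?y = "chain_displacement \<sigma> \<omega>\<^sub>0 N"
  have omega_sq: "(?\<omega> m)\<^sup>2 = 4 * \<omega>\<^sub>0\<^sup>2 * (sin (pi * real m / (4 * real N - 2)))\<^sup>2" for m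
    by (simp add: chain_omega_def power_mult_distrib)
  define C where "C k = (\<Sum>m = 1..2 * N - 2. chain_gamma m N k * cos (?\<omega> m * t))" for k
  have "C (n + 1) - 2 * C n + C (n - 1) = (\<Sum>m = 1..2 * N - 2.
      (chain_gamma m N (n + 1) - 2 * chain_gamma m N n + chain_gamma m N (n - 1)) * cos (?\<omega> m * t))"
    by (simp add: C_def sum.distrib sum_subtractf sum_distrib_left algebra_simps)
  also have "\<dots> = (\<Sum>m = 1..2 * N - 2.
      -4 * (sin (pi * real m / (4 * real N - 2)))\<^sup>2 * chain_gamma m N n * cos (?\<omega> m * t))"
    unfolding chain_gamma_second_difference[OF assms] ..
  finally have second_difference: "\<omega>\<^sub>0\<^sup>2 * (C (n + 1) - 2 * C n + C (n - 1))
      = - (\<Sum>m = 1..2 * N - 2. chain_gamma m N n * (?\<omega> m)\<^sup>2 * cos (?\<omega> m * t))"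
    by (simp add: omega_sq sum_distrib_left sum_negf[symmetric] algebra_simps)
  have "?y (n - 1) t - 2 * ?y n t + ?y (n + 1) t
      = - \<sigma> / (2 * real N - 1) * (C (n + 1) - 2 * C n + C (n - 1))"
  proof -
    have y: "?y k t = \<sigma> * (real k - 1 / (2 * real N - 1) * C k)" for k
      by (simp add: chain_displacement_def C_def)
    show ?thesis
      unfolding y using assms by (simp add: of_nat_diff algebra_simps add_divide_distrib)
  qed
  then have "\<omega>\<^sub>0\<^sup>2 * (?y (n - 1) t - 2 * ?y n t + ?y (n + 1) t)
      = - \<sigma> / (2 * real N - 1) * (\<omega>\<^sub>0\<^sup>2 * (C (n + 1) - 2 * C n + C (n - 1)))"
    by (simp only: mult_ac)
  also have "\<dots> = \<sigma> / (2 * real N - 1) * (\<Sum>m = 1..2 * N - 2. chain_gamma m N n * (?\<omega> m)\<^sup>2 * cos (?\<omega> m * t))"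
    unfolding second_difference by simp
  finally have laplacian: "\<omega>\<^sub>0\<^sup>2 * (?y (n - 1) t - 2 * ?y n t + ?y (n + 1) t)
      = \<sigma> / (2 * real N - 1) * (\<Sum>m = 1..2 * N - 2. chain_gamma m N n * (?\<omega> m)\<^sup>2 * cos (?\<omega> m * t))" .
  have "(chain_velocity \<sigma> \<omega>\<^sub>0 N n has_real_derivative
      \<sigma> / (2 * real N - 1) * (\<Sum>m = 1..2 * N - 2. chain_gamma m N n * (?\<omega> m)\<^sup>2 * cos (?\<omega> m * t)))
      (at t within S)"
    unfolding chain_velocity_def
    by (rule derivative_eq_intros refl | simp add: power2_eq_square algebra_simps)+
  then show ?thesis
    unfolding laplacian .
qed

lemma has_real_derivative_chain_velocity_free_end:
  assumes "N \<ge> 2"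
  shows "(chain_velocity \<sigma> \<omega>\<^sub>0 N (N - 1) has_real_derivative
           \<omega>\<^sub>0\<^sup>2 * (chain_displacement \<sigma> \<omega>\<^sub>0 N (N - 2) t - chain_displacement \<sigma> \<omega>\<^sub>0 N (N - 1) t)
           + \<omega>\<^sub>0\<^sup>2 * \<sigma>) (at t within S)"
proof -
  have "N - 1 - 1 = N - 2" "N - 1 + 1 = N"
    using assms by simp_all
  then show ?thesis
    using has_real_derivative_chain_velocity[of "N - 1" \<sigma> \<omega>\<^sub>0 N t S]
      chain_displacement_free_end[of N \<sigma> \<omega>\<^sub>0 t] assms
    by (simp add: algebra_simps)
qed

lemma sum_by_parts_atLeastAtMost:
  fixes w d :: "nat \<Rightarrow> 'a::comm_ring"
  shows "(\<Sum>k=1..K. w k * (d (Suc k) - d k)) + (\<Sum>k=1..K. d k * (w k - w (k - 1)))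
       = w K * d (Suc K) - w 0 * d 1"
  by (induction K) (simp_all add: algebra_simps)

lemma constant_if_has_real_derivative_zero:
  fixes f :: "real \<Rightarrow> real"
  assumes "\<And>t. t \<ge> 0 \<Longrightarrow> (f has_real_derivative 0) (at t within {0..})" and "t \<ge> 0"
  shows "f t = f 0"
proof -
  obtain c where "\<forall>s\<in>{0::real..}. f s = c"
    using has_field_derivative_zero_constant[of "{0..}" f] assms(1) by (auto simp: convex_real_interval)
  then show ?thesis
    using assms(2) by force
qed

lemma chain_energy_has_derivative_zero:
  fixes w d :: "nat \<Rightarrow> real \<Rightarrow> real" and c t :: real and L :: nat
  assumes dw: "\<And>k. k \<in> {1..L} \<Longrightarrow> (w k has_real_derivative c * (d (Suc k) t - d k t)) (at t within S)"
    and dd: "\<And>k. k \<in> {1..L} \<Longrightarrow> (d k has_real_derivative w k t - w (k - 1) t) (at t within S)"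
    and fixed: "w 0 t = 0" and free: "d (Suc L) t = 0"
  shows "((\<lambda>s. (\<Sum>k=1..L. (w k s)\<^sup>2) + c * (\<Sum>k=1..L. (d k s)\<^sup>2)) has_real_derivative 0) (at t within S)"
proof -
  have "((\<lambda>s. (\<Sum>k=1..L. (w k s)\<^sup>2) + c * (\<Sum>k=1..L. (d k s)\<^sup>2)) has_real_derivative
      (\<Sum>k=1..L. 2 * w k t * (c * (d (Suc k) t - d k t))) + c * (\<Sum>k=1..L. 2 * d k t * (w k t - w (k - 1) t)))
      (at t within S)"
    using DERIV_power[OF dw, of _ 2] DERIV_power[OF dd, of _ 2]
    by (intro DERIV_add DERIV_cmult DERIV_sum) (simp_all add: mult_ac)
  moreover have "(\<Sum>k=1..L. 2 * w k t * (c * (d (Suc k) t - d k t)))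
      + c * (\<Sum>k=1..L. 2 * d k t * (w k t - w (k - 1) t))
    = 2 * c * ((\<Sum>k=1..L. w k t * (d (Suc k) t - d k t)) + (\<Sum>k=1..L. d k t * (w k t - w (k - 1) t)))"
    unfolding distrib_left sum_distrib_left
    by (intro arg_cong2[where f = "(+)"] sum.cong) (simp_all add: algebra_simps)
  ultimately show ?thesis
    using sum_by_parts_atLeastAtMost[of "\<lambda>k. w k t" "\<lambda>k. d k t" L] fixed free by simp
qed

lemma fixed_free_chain_extensions_zero:
  fixes e w :: "nat \<Rightarrow> real \<Rightarrow> real" and c :: real and L :: nat
  assumes c: "c > 0"
    and de: "\<And>k t. k \<le> L \<Longrightarrow> t \<ge> 0 \<Longrightarrow> (e k has_real_derivative w k t) (at t within {0..})"
    and w0: "\<And>t. t \<ge> 0 \<Longrightarrow> w 0 t = 0"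
    and dwk: "\<And>k t. 1 \<le> k \<Longrightarrow> k < L \<Longrightarrow> t \<ge> 0 \<Longrightarrow>
               (w k has_real_derivative c * (e (k - 1) t - 2 * e k t + e (k + 1) t)) (at t within {0..})"
    and dwL: "\<And>t. t \<ge> 0 \<Longrightarrow> (w L has_real_derivative c * (e (L - 1) t - e L t)) (at t within {0..})"
    and e_init: "\<And>k. k \<le> L \<Longrightarrow> e k 0 = 0"
    and w_init: "\<And>k. k \<le> L \<Longrightarrow> w k 0 = 0"
    and k: "1 \<le> k" "k \<le> L" and t: "t \<ge> 0"
  shows "e k t = e (k - 1) t"
proof -
  \<comment> \<open>Spring extensions, with \<open>d (L + 1) t = 0\<close> encoding the free end.\<close>
  define d where "d k t = (if k \<le> L then e k t - e (k - 1) t else 0)" for k t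
  have dw: "(w k has_real_derivative c * (d (Suc k) t - d k t)) (at t within {0..})"
    if "k \<in> {1..L}" "t \<ge> 0" for k t
  proof (cases "k < L")
    case True
    then show ?thesis
      using dwk[of k t] that by (simp add: d_def algebra_simps)
  next
    case False
    then show ?thesis
      using dwL[OF that(2)] that by (simp add: d_def)
  qed
  have dd: "(d k has_real_derivative w k t - w (k - 1) t) (at t within {0..})"
    if "k \<in> {1..L}" "t \<ge> 0" for k t
  proof -
    have "((\<lambda>s. e k s - e (k - 1) s) has_real_derivative w k t - w (k - 1) t) (at t within {0..})"
      using that by (intro DERIV_diff de) auto
    moreover have "d k = (\<lambda>s. e k s - e (k - 1) s)"
      using that by (auto simp: d_def)
    ultimately show ?thesis
      by simp
  qed
  define E where "E t = (\<Sum>k=1..L. (w k t)\<^sup>2) + c * (\<Sum>k=1..L. (d k t)\<^sup>2)" for t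
  have "(E has_real_derivative 0) (at t within {0..})" if "t \<ge> 0" for t
    unfolding E_def using that w0 by (intro chain_energy_has_derivative_zero dw dd) (auto simp: d_def)
  moreover have "w k 0 = 0" "d k 0 = 0" if "k \<in> {1..L}" for k
    using that e_init[of k] e_init[of "k - 1"] w_init[of k] by (auto simp: d_def)
  then have "E 0 = 0"
    by (simp add: E_def)
  ultimately have E_zero: "E t = 0" if "t \<ge> 0" for t
    using constant_if_has_real_derivative_zero[of E, OF _ that] by simp
  have d_zero: "(\<Sum>k=1..L. (d k t)\<^sup>2) = 0" if "t \<ge> 0" for t
  proof -
    have "0 \<le> (\<Sum>k=1..L. (w k t)\<^sup>2)" "0 \<le> c * (\<Sum>k=1..L. (d k t)\<^sup>2)"
      using c by (simp_all add: sum_nonneg)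
    then have "c * (\<Sum>k=1..L. (d k t)\<^sup>2) = 0"
      using E_zero[OF that] unfolding E_def by linarith
    then show ?thesis
      using c by simp
  qed
  have "(d k t)\<^sup>2 = 0"
    using d_zero[OF t] k by (subst (asm) sum_nonneg_eq_0_iff) auto
  then show ?thesis
    using k by (simp add: d_def)
qed

lemma fixed_free_chain_zero:
  fixes e w :: "nat \<Rightarrow> real \<Rightarrow> real" and c :: real and L :: nat
  assumes c: "c > 0"
    and de: "\<And>k t. k \<le> L \<Longrightarrow> t \<ge> 0 \<Longrightarrow> (e k has_real_derivative w k t) (at t within {0..})"
    and dw0: "\<And>t. t \<ge> 0 \<Longrightarrow> (w 0 has_real_derivative 0) (at t within {0..})"
    and dwk: "\<And>k t. 1 \<le> k \<Longrightarrow> k < L \<Longrightarrow> t \<ge> 0 \<Longrightarrow>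
               (w k has_real_derivative c * (e (k - 1) t - 2 * e k t + e (k + 1) t)) (at t within {0..})"
    and dwL: "\<And>t. t \<ge> 0 \<Longrightarrow> (w L has_real_derivative c * (e (L - 1) t - e L t)) (at t within {0..})"
    and e_init: "\<And>k. k \<le> L \<Longrightarrow> e k 0 = 0"
    and w_init: "\<And>k. k \<le> L \<Longrightarrow> w k 0 = 0"
    and k: "k \<le> L" and t: "t \<ge> 0"
  shows "e k t = 0"
proof -
  have w0: "w 0 t = 0" if "t \<ge> 0" for t
    using constant_if_has_real_derivative_zero[OF dw0 that] w_init by simp
  have e0: "e 0 t = 0"
    using constant_if_has_real_derivative_zero[of "e 0", OF _ t] de[of 0] w0 e_init by simp
  have "e k t = e (k - 1) t" if "1 \<le> k" "k \<le> L" for k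
    using fixed_free_chain_extensions_zero[OF c de w0 dwk dwL e_init w_init that t] .
  then show ?thesis
    using k
  proof (induction k)
    case 0
    then show ?case using e0 by simp
  next
    case (Suc k)
    then show ?case by simp
  qed
qed

theorem lemma2:
  fixes N :: nat and \<omega>\<^sub>0 f\<^sub>0 \<sigma> :: real
    and x v :: "nat \<Rightarrow> real \<Rightarrow> real"
  assumes N: "N \<ge> 2"
    and w0: "\<omega>\<^sub>0 > 0" and f0: "f\<^sub>0 > 0"
    and sigma: "\<sigma> = f\<^sub>0 / \<omega>\<^sub>0\<^sup>2"
    and dx: "\<And>k t. k < N \<Longrightarrow> t \<ge> 0 \<Longrightarrow>
               (x k has_real_derivative v k t) (at t within {0..})"
    and dv0: "\<And>t. t \<ge> 0 \<Longrightarrow> (v 0 has_real_derivative 0) (at t within {0..})"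
    and dvk: "\<And>k t. 1 \<le> k \<Longrightarrow> k \<le> N - 2 \<Longrightarrow> t \<ge> 0 \<Longrightarrow>
               (v k has_real_derivative
                  \<omega>\<^sub>0\<^sup>2 * (x (k - 1) t - 2 * x k t + x (k + 1) t)) (at t within {0..})"
    and dvN: "\<And>t. t \<ge> 0 \<Longrightarrow>
               (v (N - 1) has_real_derivative
                  \<omega>\<^sub>0\<^sup>2 * (x (N - 2) t - x (N - 1) t) + f\<^sub>0) (at t within {0..})"
    and x0: "\<And>k. k < N \<Longrightarrow> x k 0 = 0"
    and v0: "\<And>k. k < N \<Longrightarrow> v k 0 = 0"
  shows "\<forall>n < N. \<forall>t \<ge> 0.
           x n t = \<sigma> * (real n - 1 / (2 * real N - 1) *
             (\<Sum>m = 1..2 * N - 2. chain_gamma m N n * cos (chain_omega \<omega>\<^sub>0 N m * t)))"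
proof (intro allI impI)
  fix n :: nat and t :: real
  assume n: "n < N" and t: "t \<ge> 0"
  let ?y = "chain_displacement \<sigma> \<omega>\<^sub>0 N" and ?u = "chain_velocity \<sigma> \<omega>\<^sub>0 N"
  have f0_eq: "f\<^sub>0 = \<omega>\<^sub>0\<^sup>2 * \<sigma>"
    using sigma w0 by simp
  have "x n t - ?y n t = 0"
  proof (rule fixed_free_chain_zero[where e = "\<lambda>k s. x k s - ?y k s" and w = "\<lambda>k s. v k s - ?u k s"
        and L = "N - 1" and c = "\<omega>\<^sub>0\<^sup>2"])
    show "((\<lambda>s. x k s - ?y k s) has_real_derivative v k s - ?u k s) (at s within {0..})"
      if "k \<le> N - 1" "s \<ge> 0" for k s
      using that N by (intro DERIV_diff dx has_real_derivative_chain_displacement) auto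
    show "((\<lambda>s. v 0 s - ?u 0 s) has_real_derivative 0) (at s within {0..})" if "s \<ge> 0" for s
      using dv0[OF that] by simp
    show "((\<lambda>s. v k s - ?u k s) has_real_derivative
        \<omega>\<^sub>0\<^sup>2 * ((x (k - 1) s - ?y (k - 1) s) - 2 * (x k s - ?y k s) + (x (k + 1) s - ?y (k + 1) s)))
        (at s within {0..})" if "1 \<le> k" "k < N - 1" "s \<ge> 0" for k s
      using DERIV_diff[OF dvk has_real_derivative_chain_velocity, of k s k] that
      by (simp add: algebra_simps)
    show "((\<lambda>s. v (N - 1) s - ?u (N - 1) s) has_real_derivative
        \<omega>\<^sub>0\<^sup>2 * ((x (N - 1 - 1) s - ?y (N - 1 - 1) s) - (x (N - 1) s - ?y (N - 1) s)))
        (at s within {0..})" if "s \<ge> 0" for s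
      using DERIV_diff[OF dvN[OF that] has_real_derivative_chain_velocity_free_end[OF N, of \<sigma> \<omega>\<^sub>0]]
      by (simp add: f0_eq numeral_2_eq_2 algebra_simps)
  qed (use n t N x0 v0 w0 chain_displacement_at_0 in auto)
  then show "x n t = \<sigma> * (real n - 1 / (2 * real N - 1) *
      (\<Sum>m = 1..2 * N - 2. chain_gamma m N n * cos (chain_omega \<omega>\<^sub>0 N m * t)))"
    by (simp add: chain_displacement_def)
qed

end
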